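(* Let $\mathbf A$ be a finite algebra. Then $\mathbf A\in\mathcal K_{\mathrm{poly}}$ if and only if every subalgebra $\mathbf B$ of $\mathbf A$ (including $\mathbf A$) is in $\mathcal K_{\mathrm{surj}}$.
   Context: Algebras are sets with operations interpreting a purely functional signature. For a finite algebra $\mathbf A$, $c_{\mathbf A}(n)$ is the maximum of $|\mathrm{Hom}(\mathbf X,\mathbf A)|$ over algebras $\mathbf X$ in the signature of $\mathbf A$ with at most $n$ elements, and $c^s_{\mathbf A}(n)$ is the maximum number of surjective homomorphisms $\mathbf X\to\mathbf A$ over such $\mathbf X$. $\mathcal K_{\mathrm{poly}}$ is the class of finite algebras $\mathbf A$ with $c_{\mathbf A}(n)\in O(n^k)$ for some $k$; $\mathcal K_{\mathrm{surj}}$ is the class of finite algebras with $c^s_{\mathbf A}(n)\in O(n^k)$ for some $k$. *)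

theory Defs
  imports Main "HOL-Library.FuncSet" "HOL-Library.Landau_Symbols"
begin

text \<open>A signature is given by an arity function ar on a type 'f of operation symbols.
An algebra is a carrier set together with an interpretation of every symbol as a function
on argument lists; only argument lists of the right length with entries in the carrier matter.\<close>

definition is_alg :: "('f \<Rightarrow> nat) \<Rightarrow> 'a set \<Rightarrow> ('f \<Rightarrow> 'a list \<Rightarrow> 'a) \<Rightarrow> bool" where
  "is_alg ar A F \<longleftrightarrow>
     (\<forall>f xs. length xs = ar f \<and> set xs \<subseteq> A \<longrightarrow> F f xs \<in> A)"

text \<open>Homomorphisms, represented extensionally (undefined outside the carrier),
so that distinct homomorphisms are distinct HOL functions.\<close>
definition homs :: "('f \<Rightarrow> nat) \<Rightarrow> 'b set \<Rightarrow> ('f \<Rightarrow> 'b list \<Rightarrow> 'b)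
                   \<Rightarrow> 'a set \<Rightarrow> ('f \<Rightarrow> 'a list \<Rightarrow> 'a) \<Rightarrow> ('b \<Rightarrow> 'a) set" where
  "homs ar X FX A FA =
     {h. h \<in> X \<rightarrow>\<^sub>E A \<and>
         (\<forall>f xs. length xs = ar f \<and> set xs \<subseteq> X \<longrightarrow> h (FX f xs) = FA f (map h xs))}"

definition surj_homs :: "('f \<Rightarrow> nat) \<Rightarrow> 'b set \<Rightarrow> ('f \<Rightarrow> 'b list \<Rightarrow> 'b)
                   \<Rightarrow> 'a set \<Rightarrow> ('f \<Rightarrow> 'a list \<Rightarrow> 'a) \<Rightarrow> ('b \<Rightarrow> 'a) set" where
  "surj_homs ar X FX A FA = {h \<in> homs ar X FX A FA. h ` X = A}"

text \<open>Every algebra with at most n elements is isomorphic to one whose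
carrier is a finite set of natural numbers, so it suffices to range over those.\<close>
definition hom_count :: "('f \<Rightarrow> nat) \<Rightarrow> 'a set \<Rightarrow> ('f \<Rightarrow> 'a list \<Rightarrow> 'a) \<Rightarrow> nat \<Rightarrow> nat" where
  "hom_count ar A FA n =
     Sup {card (homs ar X FX A FA) | (X :: nat set) FX.
            finite X \<and> card X \<le> n \<and> is_alg ar X FX}"

definition surj_hom_count :: "('f \<Rightarrow> nat) \<Rightarrow> 'a set \<Rightarrow> ('f \<Rightarrow> 'a list \<Rightarrow> 'a) \<Rightarrow> nat \<Rightarrow> nat" where
  "surj_hom_count ar A FA n =
     Sup {card (surj_homs ar X FX A FA) | (X :: nat set) FX.
            finite X \<and> card X \<le> n \<and> is_alg ar X FX}"

definition K_poly :: "('f \<Rightarrow> nat) \<Rightarrow> 'a set \<Rightarrow> ('f \<Rightarrow> 'a list \<Rightarrow> 'a) \<Rightarrow> bool" where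
  "K_poly ar A FA \<longleftrightarrow> finite A \<and> is_alg ar A FA \<and>
     (\<exists>k::nat. (\<lambda>n. real (hom_count ar A FA n)) \<in> O(\<lambda>n. real n ^ k))"

definition K_surj :: "('f \<Rightarrow> nat) \<Rightarrow> 'a set \<Rightarrow> ('f \<Rightarrow> 'a list \<Rightarrow> 'a) \<Rightarrow> bool" where
  "K_surj ar A FA \<longleftrightarrow> finite A \<and> is_alg ar A FA \<and>
     (\<exists>k::nat. (\<lambda>n. real (surj_hom_count ar A FA n)) \<in> O(\<lambda>n. real n ^ k))"

text \<open>Subuniverses: subsets closed under all operations. The subalgebra on B carries the
restriction of the operations of A (FA itself, which is only consulted on lists from B).\<close>
definition subuniverse :: "('f \<Rightarrow> nat) \<Rightarrow> 'a set \<Rightarrow> ('f \<Rightarrow> 'a list \<Rightarrow> 'a) \<Rightarrow> 'a set \<Rightarrow> bool" where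
  "subuniverse ar A FA B \<longleftrightarrow> B \<subseteq> A \<and> is_alg ar B FA"

end

theory Submission
  imports Defs
begin

text \<open>Every homomorphism \<open>X \<rightarrow> A\<close> is a surjective homomorphism onto its image, which is a
subalgebra of \<open>A\<close>; since \<open>A\<close> has only finitely many subalgebras, \<open>c\<^sub>A(n) \<le> \<Sum>\<^sub>B c\<^sup>s\<^sub>B(n)\<close>.
Conversely a surjective homomorphism onto a subalgebra \<open>B\<close> is a homomorphism into \<open>A\<close>, so
\<open>c\<^sup>s\<^sub>B(n) \<le> c\<^sub>A(n)\<close>. Polynomial bounds are preserved under finite sums and under
pointwise smaller functions.\<close>

definition polynomially_bounded :: "(nat \<Rightarrow> nat) \<Rightarrow> bool" where
  "polynomially_bounded f \<longleftrightarrow> (\<exists>k. (\<lambda>n. real (f n)) \<in> O(\<lambda>n. real n ^ k))"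

lemma K_poly_iff:
  "K_poly ar A FA \<longleftrightarrow> finite A \<and> is_alg ar A FA \<and> polynomially_bounded (hom_count ar A FA)"
  by (simp add: K_poly_def polynomially_bounded_def)

lemma K_surj_iff:
  "K_surj ar A FA \<longleftrightarrow> finite A \<and> is_alg ar A FA \<and> polynomially_bounded (surj_hom_count ar A FA)"
  by (simp add: K_surj_def polynomially_bounded_def)

lemma power_bigo_power:
  assumes "k \<le> l"
  shows "(\<lambda>n::nat. real n ^ k) \<in> O(\<lambda>n. real n ^ l)"
proof (rule bigoI[where c = 1])
  show "\<forall>\<^sub>F n in at_top. norm (real n ^ k) \<le> 1 * norm (real n ^ l)"
    using eventually_ge_at_top[of "1::nat"]
    by eventually_elim (use assms in \<open>auto intro: power_increasing\<close>)
qed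

lemma polynomially_bounded_le:
  assumes "\<And>n. f n \<le> g n" and "polynomially_bounded g"
  shows "polynomially_bounded f"
proof -
  obtain k where "(\<lambda>n. real (g n)) \<in> O(\<lambda>n. real n ^ k)"
    using assms(2) unfolding polynomially_bounded_def by blast
  moreover have "(\<lambda>n. real (f n)) \<in> O(\<lambda>n. real (g n))"
    by (rule bigoI[where c = 1]) (simp add: assms(1))
  ultimately show ?thesis
    unfolding polynomially_bounded_def by (blast intro: landau_o.big_trans)
qed

lemma polynomially_bounded_add:
  assumes "polynomially_bounded f" and "polynomially_bounded g"
  shows "polynomially_bounded (\<lambda>n. f n + g n)"
proof -
  obtain k l where
    f: "(\<lambda>n. real (f n)) \<in> O(\<lambda>n. real n ^ k)" and
    g: "(\<lambda>n. real (g n)) \<in> O(\<lambda>n. real n ^ l)"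
    using assms unfolding polynomially_bounded_def by blast
  have "(\<lambda>n. real (f n)) \<in> O(\<lambda>n. real n ^ max k l)"
    using f power_bigo_power[of k "max k l"] by (auto intro: landau_o.big_trans)
  moreover have "(\<lambda>n. real (g n)) \<in> O(\<lambda>n. real n ^ max k l)"
    using g power_bigo_power[of l "max k l"] by (auto intro: landau_o.big_trans)
  ultimately have "(\<lambda>n. real (f n) + real (g n)) \<in> O(\<lambda>n. real n ^ max k l)"
    by (rule sum_in_bigo)
  then show ?thesis
    unfolding polynomially_bounded_def by auto
qed

lemma polynomially_bounded_sum:
  assumes "finite S" and "\<And>B. B \<in> S \<Longrightarrow> polynomially_bounded (f B)"
  shows "polynomially_bounded (\<lambda>n. \<Sum>B\<in>S. f B n)"
  using assms
proof (induction S rule: finite_induct)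
  case empty
  then show ?case
    unfolding polynomially_bounded_def by auto
next
  case (insert B S)
  then show ?case
    by (simp add: polynomially_bounded_add)
qed

lemma homs_subset_PiE: "homs ar X FX A FA \<subseteq> X \<rightarrow>\<^sub>E A"
  unfolding homs_def by blast

lemma surj_homs_subset_homs: "surj_homs ar X FX A FA \<subseteq> homs ar X FX A FA"
  unfolding surj_homs_def by blast

lemma homs_mono:
  assumes "B \<subseteq> A"
  shows "homs ar X FX B FA \<subseteq> homs ar X FX A FA"
  using assms unfolding homs_def by (auto simp: PiE_iff)

lemma finite_homs:
  assumes "finite X" and "finite A"
  shows "finite (homs ar X FX A FA)"
  using assms by (blast intro: finite_subset[OF homs_subset_PiE] finite_PiE)

lemma card_homs_le:
  assumes "finite X" and "finite A" and "card X \<le> n"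
  shows "card (homs ar X FX A FA) \<le> (card A + 1) ^ n"
proof -
  have "card (homs ar X FX A FA) \<le> card (X \<rightarrow>\<^sub>E A)"
    using assms by (intro card_mono finite_PiE homs_subset_PiE)
  also have "\<dots> = card A ^ card X"
    using assms by (simp add: card_PiE)
  also have "\<dots> \<le> (card A + 1) ^ card X"
    by (intro power_mono) auto
  also have "\<dots> \<le> (card A + 1) ^ n"
    using assms(3) by (intro power_increasing) auto
  finally show ?thesis .
qed

lemma card_le_Sup_homs:
  fixes X :: "nat set"
  assumes "finite A" and G: "\<And>X FX. G X FX \<subseteq> homs ar X FX A FA"
    and "finite X" and "card X \<le> n" and "is_alg ar X FX"
  shows "card (G X FX) \<le>
    Sup {card (G X FX) | (X :: nat set) FX. finite X \<and> card X \<le> n \<and> is_alg ar X FX}"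
proof (rule cSup_upper)
  show "bdd_above {card (G X FX) | (X :: nat set) FX. finite X \<and> card X \<le> n \<and> is_alg ar X FX}"
  proof (rule bdd_aboveI, safe)
    fix Y :: "nat set" and FY
    assume "finite Y" "card Y \<le> n"
    then have "card (G Y FY) \<le> card (homs ar Y FY A FA)"
      using assms(1) by (intro card_mono finite_homs G)
    also have "\<dots> \<le> (card A + 1) ^ n"
      using \<open>finite Y\<close> assms(1) \<open>card Y \<le> n\<close> by (rule card_homs_le)
    finally show "card (G Y FY) \<le> (card A + 1) ^ n" .
  qed
qed (use assms in blast)

lemma Sup_nat_least:
  assumes "\<And>x. x \<in> S \<Longrightarrow> x \<le> m"
  shows "Sup S \<le> (m :: nat)"
  using assms by (cases "S = {}") (auto intro: cSup_least)

lemma card_homs_le_hom_count: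
  fixes X :: "nat set"
  assumes "finite A" and "finite X" and "card X \<le> n" and "is_alg ar X FX"
  shows "card (homs ar X FX A FA) \<le> hom_count ar A FA n"
  unfolding hom_count_def using assms by (intro card_le_Sup_homs) auto

lemma card_surj_homs_le_surj_hom_count:
  fixes X :: "nat set"
  assumes "finite A" and "finite X" and "card X \<le> n" and "is_alg ar X FX"
  shows "card (surj_homs ar X FX A FA) \<le> surj_hom_count ar A FA n"
  unfolding surj_hom_count_def using assms by (intro card_le_Sup_homs[OF _ surj_homs_subset_homs])

lemma hom_count_le:
  assumes "\<And>(X :: nat set) FX. finite X \<Longrightarrow> card X \<le> n \<Longrightarrow> is_alg ar X FX \<Longrightarrow>
    card (homs ar X FX A FA) \<le> m"
  shows "hom_count ar A FA n \<le> m"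
  unfolding hom_count_def using assms by (intro Sup_nat_least) blast

lemma surj_hom_count_le:
  assumes "\<And>(X :: nat set) FX. finite X \<Longrightarrow> card X \<le> n \<Longrightarrow> is_alg ar X FX \<Longrightarrow>
    card (surj_homs ar X FX A FA) \<le> m"
  shows "surj_hom_count ar A FA n \<le> m"
  unfolding surj_hom_count_def using assms by (intro Sup_nat_least) blast

lemma subuniverse_hom_image:
  assumes "is_alg ar X FX" and h: "h \<in> homs ar X FX A FA"
  shows "subuniverse ar A FA (h ` X)"
  unfolding subuniverse_def is_alg_def
proof (intro conjI allI impI)
  show "h ` X \<subseteq> A"
    using h unfolding homs_def by auto
next
  fix f xs
  assume xs: "length xs = ar f \<and> set xs \<subseteq> h ` X"
  then have "xs \<in> lists (h ` X)"
    by auto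
  then obtain ys where ys: "set ys \<subseteq> X" "xs = map h ys"
    by (auto simp: lists_image)
  with xs have "FA f xs = h (FX f ys)"
    using h unfolding homs_def by auto
  moreover have "FX f ys \<in> X"
    using assms(1) xs ys unfolding is_alg_def by auto
  ultimately show "FA f xs \<in> h ` X"
    by blast
qed

lemma homs_eq_UN_surj_homs:
  assumes "is_alg ar X FX"
  shows "homs ar X FX A FA = (\<Union>B \<in> {B. subuniverse ar A FA B}. surj_homs ar X FX B FA)"
proof
  show "homs ar X FX A FA \<subseteq> (\<Union>B \<in> {B. subuniverse ar A FA B}. surj_homs ar X FX B FA)"
  proof
    fix h
    assume h: "h \<in> homs ar X FX A FA"
    then have "h \<in> surj_homs ar X FX (h ` X) FA"
      unfolding surj_homs_def homs_def by (auto simp: PiE_iff)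
    with subuniverse_hom_image[OF assms h]
    show "h \<in> (\<Union>B \<in> {B. subuniverse ar A FA B}. surj_homs ar X FX B FA)"
      by blast
  qed
next
  show "(\<Union>B \<in> {B. subuniverse ar A FA B}. surj_homs ar X FX B FA) \<subseteq> homs ar X FX A FA"
    using surj_homs_subset_homs homs_mono unfolding subuniverse_def by blast
qed

lemma finite_subuniverses:
  assumes "finite A"
  shows "finite {B. subuniverse ar A FA B}"
  using assms unfolding subuniverse_def by (auto intro: finite_subset[of _ "Pow A"])

lemma surj_hom_count_le_hom_count:
  assumes "finite A" and "B \<subseteq> A"
  shows "surj_hom_count ar B FA n \<le> hom_count ar A FA n"
proof (rule surj_hom_count_le)
  fix X :: "nat set" and FX
  assume X: "finite X" "card X \<le> n" "is_alg ar X FX"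
  have "surj_homs ar X FX B FA \<subseteq> homs ar X FX A FA"
    using surj_homs_subset_homs homs_mono[OF assms(2)] by blast
  then have "card (surj_homs ar X FX B FA) \<le> card (homs ar X FX A FA)"
    using assms(1) X(1) by (intro card_mono finite_homs)
  also have "\<dots> \<le> hom_count ar A FA n"
    using assms(1) X by (rule card_homs_le_hom_count)
  finally show "card (surj_homs ar X FX B FA) \<le> hom_count ar A FA n" .
qed

lemma hom_count_le_sum_surj_hom_count:
  assumes "finite A"
  shows "hom_count ar A FA n \<le> (\<Sum>B | subuniverse ar A FA B. surj_hom_count ar B FA n)"
proof (rule hom_count_le)
  fix X :: "nat set" and FX
  assume X: "finite X" "card X \<le> n" "is_alg ar X FX"
  let ?S = "{B. subuniverse ar A FA B}"
  have "card (homs ar X FX A FA) = card (\<Union>B \<in> ?S. surj_homs ar X FX B FA)"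
    using X(3) by (simp only: homs_eq_UN_surj_homs)
  also have "\<dots> \<le> (\<Sum>B \<in> ?S. card (surj_homs ar X FX B FA))"
    using assms by (intro card_UN_le finite_subuniverses)
  also have "\<dots> \<le> (\<Sum>B \<in> ?S. surj_hom_count ar B FA n)"
  proof (rule sum_mono)
    fix B
    assume "B \<in> ?S"
    then have "finite B"
      using assms unfolding subuniverse_def by (auto intro: finite_subset)
    then show "card (surj_homs ar X FX B FA) \<le> surj_hom_count ar B FA n"
      using X by (rule card_surj_homs_le_surj_hom_count)
  qed
  finally show "card (homs ar X FX A FA) \<le> (\<Sum>B \<in> ?S. surj_hom_count ar B FA n)" .
qed

theorem proposition2p1:
  fixes ar :: "'f \<Rightarrow> nat" and A :: "'a set" and FA :: "'f \<Rightarrow> 'a list \<Rightarrow> 'a"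
  assumes "finite A" and "is_alg ar A FA"
  shows "K_poly ar A FA \<longleftrightarrow> (\<forall>B. subuniverse ar A FA B \<longrightarrow> K_surj ar B FA)"
proof
  assume "K_poly ar A FA"
  then have bounded: "polynomially_bounded (hom_count ar A FA)"
    by (simp add: K_poly_iff)
  show "\<forall>B. subuniverse ar A FA B \<longrightarrow> K_surj ar B FA"
  proof (intro allI impI)
    fix B
    assume "subuniverse ar A FA B"
    then have "B \<subseteq> A" and "is_alg ar B FA"
      unfolding subuniverse_def by auto
    with assms(1) bounded show "K_surj ar B FA"
      unfolding K_surj_iff
      by (auto intro: finite_subset polynomially_bounded_le surj_hom_count_le_hom_count)
  qed
next
  assume "\<forall>B. subuniverse ar A FA B \<longrightarrow> K_surj ar B FA"
  then have "polynomially_bounded (\<lambda>n. \<Sum>B | subuniverse ar A FA B. surj_hom_count ar B FA n)"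
    using assms(1) by (intro polynomially_bounded_sum finite_subuniverses) (simp_all add: K_surj_iff)
  then have "polynomially_bounded (hom_count ar A FA)"
    by (rule polynomially_bounded_le[OF hom_count_le_sum_surj_hom_count[OF assms(1)]])
  with assms show "K_poly ar A FA"
    by (simp add: K_poly_iff)
qed

end
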